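(* Let $s\geq 3$ and $v=3s$. Then there exist a cubic bipartite graph $\Gamma$ on $2s$ vertices, a symmetric configuration $\mathcal{X}$ on $v$ points with strong chromatic number 3, and a strong 3-colouring of $\mathcal{X}$ such that, for each of the three colour classes, the subgraph of the associated graph of $\mathcal{X}$ induced by the points of the other two colour classes is isomorphic to $\Gamma$.
   Context: A symmetric configuration $v_3$ consists of a set of $v$ points and a collection of $v$ blocks, each block being a 3-element subset of the points, such that every point lies in exactly 3 blocks and any two distinct points lie in at most one common block. The associated graph has the points as vertices, two points adjacent iff they lie in a common block. A strong colouring is an assignment of colours to points such that the three points of every block receive three distinct colours; the strong chromatic number is the minimum number of colours in a strong colouring. *)

theory Defs
  imports Main
begin

definition sym_config_v3 :: "'a set \<Rightarrow> 'a set set \<Rightarrow> bool" where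
  "sym_config_v3 P B \<longleftrightarrow>
     finite P \<and> finite B \<and> card B = card P \<and>
     (\<forall>b\<in>B. b \<subseteq> P \<and> card b = 3) \<and>
     (\<forall>p\<in>P. card {b\<in>B. p \<in> b} = 3) \<and>
     (\<forall>p\<in>P. \<forall>q\<in>P. p \<noteq> q \<longrightarrow> card {b\<in>B. p \<in> b \<and> q \<in> b} \<le> 1)"

definition assoc_adj :: "'a set set \<Rightarrow> 'a \<Rightarrow> 'a \<Rightarrow> bool" where
  "assoc_adj B x y \<longleftrightarrow> x \<noteq> y \<and> (\<exists>b\<in>B. x \<in> b \<and> y \<in> b)"

definition strong_colouring :: "'a set \<Rightarrow> 'a set set \<Rightarrow> ('a \<Rightarrow> nat) \<Rightarrow> nat \<Rightarrow> bool" where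
  "strong_colouring P B c k \<longleftrightarrow> c ` P \<subseteq> {..<k} \<and> (\<forall>b\<in>B. inj_on c b)"

definition strong_chromatic_number :: "'a set \<Rightarrow> 'a set set \<Rightarrow> nat" where
  "strong_chromatic_number P B = (LEAST k. \<exists>c. strong_colouring P B c k)"

definition simple_graph :: "'b set \<Rightarrow> ('b \<Rightarrow> 'b \<Rightarrow> bool) \<Rightarrow> bool" where
  "simple_graph V E \<longleftrightarrow> finite V \<and> (\<forall>x y. E x y \<longrightarrow> x \<in> V \<and> y \<in> V \<and> x \<noteq> y \<and> E y x)"

definition cubic_bipartite_graph :: "'b set \<Rightarrow> ('b \<Rightarrow> 'b \<Rightarrow> bool) \<Rightarrow> bool" where
  "cubic_bipartite_graph V E \<longleftrightarrow> simple_graph V E \<and>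
     (\<forall>x\<in>V. card {y\<in>V. E x y} = 3) \<and>
     (\<exists>X Y. X \<union> Y = V \<and> X \<inter> Y = {} \<and>
        (\<forall>x y. E x y \<longrightarrow> (x \<in> X \<and> y \<in> Y) \<or> (x \<in> Y \<and> y \<in> X)))"

definition graph_iso :: "'a set \<Rightarrow> ('a \<Rightarrow> 'a \<Rightarrow> bool) \<Rightarrow> 'b set \<Rightarrow> ('b \<Rightarrow> 'b \<Rightarrow> bool) \<Rightarrow> bool" where
  "graph_iso V1 E1 V2 E2 \<longleftrightarrow> (\<exists>f. bij_betw f V1 V2 \<and>
     (\<forall>x\<in>V1. \<forall>y\<in>V1. E1 x y \<longleftrightarrow> E2 (f x) (f y)))"

definition induced_assoc :: "'a set set \<Rightarrow> 'a set \<Rightarrow> 'a \<Rightarrow> 'a \<Rightarrow> bool" where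
  "induced_assoc B S x y \<longleftrightarrow> x \<in> S \<and> y \<in> S \<and> assoc_adj B x y"

end

theory Submission
  imports Defs "HOL-Number_Theory.Cong"
begin

text \<open>
  Points are pairs (x, J) of an index x modulo s and a colour J < 3, encoded as 3 x + J.
  For i modulo s and t < 3 the block B(i, t) consists of the points (i + o_J(t), J), J < 3,
  with offsets o_0(t) = 0, o_1(t) = t, o_2(t) = 2 t mod 3.  For colours a \<noteq> b the three gaps
  o_b(t) - o_a(t) are distinct integers of spread at most 2, hence distinct modulo s \<ge> 3.
  Therefore two points share at most one block, every point has exactly three neighbours of
  each other colour, and the colour J is a strong 3-colouring.  The subgraph induced on two
  colour classes a, b is the bipartite graph in which (x, a) ~ (y, b) iff y - x is a gap;
  the gap sets are {0, 1, 2} for the colour pairs (0, 1) and (0, 2) and {-1, 0, 1} for (1, 2),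
  so after shifting one side all three subgraphs are the same cubic bipartite graph.
\<close>

lemma cong_int_eq_if_abs_less:
  fixes a b m :: int
  assumes "[a = b] (mod m)" "\<bar>a - b\<bar> < m"
  shows "a = b"
proof (rule ccontr)
  assume "a \<noteq> b"
  moreover have "m dvd a - b" using assms(1) by (simp add: cong_iff_dvd_diff)
  ultimately have "\<bar>m\<bar> \<le> \<bar>a - b\<bar>" by (simp add: dvd_imp_le_int)
  with assms(2) show False by simp
qed

lemma assoc_adj_colours_differ:
  assumes "strong_colouring P B c k" "assoc_adj B x y"
  shows "c x \<noteq> c y"
  using assms unfolding strong_colouring_def assoc_adj_def by (auto dest: inj_onD)

lemma card_block_le_colours:
  assumes "strong_colouring P B c k" "b \<in> B" "b \<subseteq> P"
  shows "card b \<le> k"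
proof -
  have "card b = card (c ` b)"
    using assms(1,2) unfolding strong_colouring_def by (simp add: card_image)
  also have "\<dots> \<le> card {..<k}"
    using assms(1,3) unfolding strong_colouring_def by (intro card_mono) auto
  finally show ?thesis by simp
qed

lemma strong_chromatic_number_eq_3:
  assumes "sym_config_v3 P B" "P \<noteq> {}" "strong_colouring P B c 3"
  shows "strong_chromatic_number P B = 3"
  unfolding strong_chromatic_number_def
proof (rule Least_equality)
  show "\<exists>c. strong_colouring P B c 3" using assms(3) by blast
next
  fix k assume "\<exists>c. strong_colouring P B c k"
  then obtain c' where c': "strong_colouring P B c' k" by blast
  obtain p where "p \<in> P" using assms(2) by blast
  then have "card {b \<in> B. p \<in> b} = 3" using assms(1) unfolding sym_config_v3_def by blast
  then obtain b where "b \<in> B" by fastforce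
  then have "b \<subseteq> P" "card b = 3" using assms(1) unfolding sym_config_v3_def by auto
  with c' \<open>b \<in> B\<close> show "3 \<le> k" using card_block_le_colours by metis
qed

lemma induced_colour_class_cubic_bipartite:
  assumes "finite P" "strong_colouring P B c 3" "i < 3"
    and "\<forall>x\<in>{p\<in>P. c p \<noteq> i}. card {y\<in>{p\<in>P. c p \<noteq> i}. induced_assoc B {p\<in>P. c p \<noteq> i} x y} = 3"
  shows "cubic_bipartite_graph {p\<in>P. c p \<noteq> i} (induced_assoc B {p\<in>P. c p \<noteq> i})"
  unfolding cubic_bipartite_graph_def
proof (intro conjI)
  let ?V = "{p\<in>P. c p \<noteq> i}" and ?j = "(i + 1) mod 3"
  show "simple_graph ?V (induced_assoc B ?V)"
    using assms(1) unfolding simple_graph_def induced_assoc_def assoc_adj_def by auto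
  show "\<forall>x\<in>?V. card {y\<in>?V. induced_assoc B ?V x y} = 3" by (rule assms(4))
  have "x \<in> {p\<in>?V. c p = ?j} \<and> y \<in> ?V - {p\<in>?V. c p = ?j} \<or>
             x \<in> ?V - {p\<in>?V. c p = ?j} \<and> y \<in> {p\<in>?V. c p = ?j}"
    if xy: "induced_assoc B ?V x y" for x y
  proof -
    have "x \<in> ?V" "y \<in> ?V" "c x \<noteq> c y"
      using xy assoc_adj_colours_differ[OF assms(2)] unfolding induced_assoc_def by auto
    moreover have "c x < 3" "c y < 3"
      using \<open>x \<in> ?V\<close> \<open>y \<in> ?V\<close> assms(2) unfolding strong_colouring_def by auto
    \<comment> \<open>x and y carry the two colours other than i, and exactly one of them is ?j\<close>
    moreover have "c x = ?j \<longleftrightarrow> c y \<noteq> ?j"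
      using calculation assms(3) by auto presburger+
    ultimately show ?thesis by auto
  qed
  then show "\<exists>X Y. X \<union> Y = ?V \<and> X \<inter> Y = {} \<and>
      (\<forall>x y. induced_assoc B ?V x y \<longrightarrow> x \<in> X \<and> y \<in> Y \<or> x \<in> Y \<and> y \<in> X)"
    by (intro exI[of _ "{p\<in>?V. c p = ?j}"] exI[of _ "?V - {p\<in>?V. c p = ?j}"]) blast
qed

lemma graph_iso_induced_assocI:
  assumes "bij_betw f W V"
    and "\<And>x y. x \<in> W \<Longrightarrow> y \<in> W \<Longrightarrow> assoc_adj B x y \<longleftrightarrow> assoc_adj B (f x) (f y)"
  shows "graph_iso W (induced_assoc B W) V (induced_assoc B V)"
  unfolding graph_iso_def
proof (intro exI conjI ballI)
  show "bij_betw f W V" by (rule assms(1))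
  fix x y assume "x \<in> W" "y \<in> W"
  moreover have "f x \<in> V" "f y \<in> V"
    using calculation assms(1) by (simp_all add: bij_betw_apply)
  ultimately show "induced_assoc B W x y \<longleftrightarrow> induced_assoc B V (f x) (f y)"
    unfolding induced_assoc_def using assms(2) by blast
qed

lemma third_colour_iff:
  fixes a c j :: nat
  assumes "a < 3" "c < 3" "j < 3" "a \<noteq> c"
  shows "j = 3 - c - a \<longleftrightarrow> j \<noteq> c \<and> j \<noteq> a"
proof -
  have "a = 0 \<or> a = 1 \<or> a = 2" "c = 0 \<or> c = 1 \<or> c = 2" "j = 0 \<or> j = 1 \<or> j = 2"
    using assms(1-3) by linarith+
  then show ?thesis using assms(4) by (elim disjE) simp_all
qed

definition offset :: "nat \<Rightarrow> nat \<Rightarrow> nat" where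
  "offset J t = (if J = 0 then 0 else if J = 1 then t else (2 * t) mod 3)"

definition offset_diff :: "nat \<Rightarrow> nat \<Rightarrow> nat \<Rightarrow> int" where
  "offset_diff a b t = int (offset b t) - int (offset a t)"

lemma offset_diff_cong_imp_eq:
  assumes "3 \<le> s" "a < 3" "b < 3" "a \<noteq> b" "t < 3" "t' < 3"
    and "[offset_diff a b t = offset_diff a b t'] (mod int s)"
  shows "t = t'"
proof -
  have "\<bar>offset_diff a b t - offset_diff a b t'\<bar> \<le> 2 \<and>
      (offset_diff a b t = offset_diff a b t' \<longrightarrow> t = t')"
    using assms(2-6) unfolding less_Suc_eq numeral_3_eq_3 numeral_2_eq_2
    by (elim disjE) (simp_all add: offset_diff_def offset_def)
  with assms(1,7) show ?thesis using cong_int_eq_if_abs_less by fastforce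
qed

definition cyclic_point :: "nat \<Rightarrow> nat \<Rightarrow> nat \<Rightarrow> nat \<Rightarrow> nat" where
  "cyclic_point s i t J = 3 * ((i + offset J t) mod s) + J"

definition cyclic_block :: "nat \<Rightarrow> nat \<Rightarrow> nat \<Rightarrow> nat set" where
  "cyclic_block s i t = cyclic_point s i t ` {..<3}"

definition cyclic_blocks :: "nat \<Rightarrow> nat set set" where
  "cyclic_blocks s = (\<lambda>(i, t). cyclic_block s i t) ` ({..<s} \<times> {..<3})"

lemma cyclic_point_mod: "J < 3 \<Longrightarrow> cyclic_point s i t J mod 3 = J"
  unfolding cyclic_point_def by simp

lemma cyclic_point_in_block: "J < 3 \<Longrightarrow> cyclic_point s i t J \<in> cyclic_block s i t"
  unfolding cyclic_block_def by simp

lemma cyclic_block_in_blocks: "i < s \<Longrightarrow> t < 3 \<Longrightarrow> cyclic_block s i t \<in> cyclic_blocks s"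
  unfolding cyclic_blocks_def by auto

lemma cyclic_blocksE:
  assumes "b \<in> cyclic_blocks s"
  obtains i t where "i < s" "t < 3" "b = cyclic_block s i t"
  using assms unfolding cyclic_blocks_def by auto

lemma mem_cyclic_block_iff: "p \<in> cyclic_block s i t \<longleftrightarrow> p div 3 = (i + offset (p mod 3) t) mod s"
proof
  assume "p \<in> cyclic_block s i t"
  then obtain J where "J < 3" "p = 3 * ((i + offset J t) mod s) + J"
    unfolding cyclic_block_def cyclic_point_def by auto
  then show "p div 3 = (i + offset (p mod 3) t) mod s" by simp
next
  assume "p div 3 = (i + offset (p mod 3) t) mod s"
  then have "p = 3 * ((i + offset (p mod 3) t) mod s) + p mod 3"
    using div_mult_mod_eq[of p 3] by simp
  then show "p \<in> cyclic_block s i t"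
    unfolding cyclic_block_def cyclic_point_def by (intro image_eqI[of _ _ "p mod 3"]) auto
qed

lemma mem_cyclic_block_iff_cong:
  assumes "p < 3 * s"
  shows "p \<in> cyclic_block s i t \<longleftrightarrow> [int i + int (offset (p mod 3) t) = int (p div 3)] (mod int s)"
proof -
  have "p div 3 mod s = p div 3" using assms by simp
  then have "p div 3 = (i + offset (p mod 3) t) mod s \<longleftrightarrow> [i + offset (p mod 3) t = p div 3] (mod s)"
    unfolding cong_def by auto
  then show ?thesis unfolding mem_cyclic_block_iff by (simp add: cong_int_iff[symmetric])
qed

lemma cyclic_block_colour_inj:
  assumes "x \<in> cyclic_block s i t" "y \<in> cyclic_block s i t" "x mod 3 = y mod 3"
  shows "x = y"
  using assms div_mult_mod_eq[of x 3] div_mult_mod_eq[of y 3] unfolding mem_cyclic_block_iff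
  by metis

lemma cyclic_block_index_unique:
  assumes "i < s" "i' < s" "p \<in> cyclic_block s i t" "p \<in> cyclic_block s i' t"
  shows "i = i'"
proof -
  have "[i + offset (p mod 3) t = i' + offset (p mod 3) t] (mod s)"
    using assms(3,4) unfolding mem_cyclic_block_iff cong_def by simp
  then show ?thesis
    using assms(1,2) by (simp add: cong_add_rcancel_nat cong_less_modulus_unique_nat)
qed

lemma card_cyclic_block: "card (cyclic_block s i t) = 3"
proof -
  have "inj_on (cyclic_point s i t) {..<3}"
    by (rule inj_onI) (metis cyclic_point_mod lessThan_iff)
  then show ?thesis unfolding cyclic_block_def by (simp add: card_image)
qed

lemma cyclic_block_subset:
  assumes "0 < s"
  shows "cyclic_block s i t \<subseteq> {..<3 * s}"
proof
  fix p assume "p \<in> cyclic_block s i t"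
  then have "p div 3 < s" using assms by (simp add: mem_cyclic_block_iff)
  then show "p \<in> {..<3 * s}" by simp
qed

lemma cyclic_block_gap_cong:
  assumes "p < 3 * s" "q < 3 * s" "p \<in> cyclic_block s i t" "q \<in> cyclic_block s i t"
  shows "[offset_diff (p mod 3) (q mod 3) t = int (q div 3) - int (p div 3)] (mod int s)"
  using cong_diff[OF assms(4,3)[unfolded mem_cyclic_block_iff_cong[OF assms(2)]
      mem_cyclic_block_iff_cong[OF assms(1)]]]
  by (simp add: offset_diff_def)

abbreviation avoiding_colour :: "nat \<Rightarrow> nat \<Rightarrow> nat set" where
  "avoiding_colour s c \<equiv> {p \<in> {..<3 * s}. p mod 3 \<noteq> c}"

lemma card_avoiding_colour:
  assumes "c < 3"
  shows "card (avoiding_colour s c) = 2 * s"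
proof -
  let ?C = "(\<lambda>I. 3 * I + c) ` {..<s}"
  have "p \<in> ?C \<longleftrightarrow> p mod 3 = c" if "p < 3 * s" for p
  proof
    assume "p \<in> ?C"
    then show "p mod 3 = c" using assms by auto
  next
    assume "p mod 3 = c"
    then have "p = 3 * (p div 3) + c" using div_mult_mod_eq[of p 3] by simp
    moreover have "p div 3 < s" using that by simp
    ultimately show "p \<in> ?C" by blast
  qed
  then have "avoiding_colour s c = {..<3 * s} - ?C" by auto
  moreover have "card ?C = s" by (simp add: card_image inj_on_def)
  moreover have "?C \<subseteq> {..<3 * s}" using assms by auto
  ultimately show ?thesis by (simp add: card_Diff_subset)
qed

definition relabel :: "nat \<Rightarrow> (nat \<Rightarrow> int) \<Rightarrow> (nat \<Rightarrow> nat) \<Rightarrow> nat \<Rightarrow> nat" where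
  "relabel s k \<sigma> p = 3 * nat ((int (p div 3) + k (p mod 3)) mod int s) + \<sigma> (p mod 3)"

lemma relabel_mod: "\<sigma> (p mod 3) < 3 \<Longrightarrow> relabel s k \<sigma> p mod 3 = \<sigma> (p mod 3)"
  unfolding relabel_def by simp

lemma relabel_div:
  "\<sigma> (p mod 3) < 3 \<Longrightarrow> relabel s k \<sigma> p div 3 = nat ((int (p div 3) + k (p mod 3)) mod int s)"
  unfolding relabel_def by simp

definition base_index :: "nat \<Rightarrow> nat \<Rightarrow> nat \<Rightarrow> nat" where
  "base_index s p t = nat ((int (p div 3) - int (offset (p mod 3) t)) mod int s)"

context
  fixes s :: nat
  assumes s_ge_3: "3 \<le> s"
begin

lemma s_pos: "0 < s"
  using s_ge_3 by simp

lemma base_index_less: "base_index s p t < s"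
  unfolding base_index_def using s_pos by (simp add: nat_less_iff)

lemma mem_cyclic_block_base_index:
  assumes "p < 3 * s"
  shows "p \<in> cyclic_block s (base_index s p t) t"
proof -
  have "int (base_index s p t) = (int (p div 3) - int (offset (p mod 3) t)) mod int s"
    unfolding base_index_def using s_pos by simp
  then show ?thesis
    unfolding mem_cyclic_block_iff_cong[OF assms] by (simp add: cong_def mod_add_left_eq)
qed

lemma base_index_unique:
  assumes "i < s" "p < 3 * s" "p \<in> cyclic_block s i t"
  shows "i = base_index s p t"
  using cyclic_block_index_unique[OF assms(1) base_index_less assms(3)]
    mem_cyclic_block_base_index[OF assms(2)] by blast

lemma cyclic_blocks_meet_once:
  assumes "i < s" "i' < s" "t < 3" "t' < 3" "p < 3 * s" "q < 3 * s" "p \<noteq> q"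
    and "p \<in> cyclic_block s i t" "q \<in> cyclic_block s i t"
    and "p \<in> cyclic_block s i' t'" "q \<in> cyclic_block s i' t'"
  shows "i = i' \<and> t = t'"
proof -
  have colours: "p mod 3 \<noteq> q mod 3"
    using cyclic_block_colour_inj assms(7-9) by blast
  have "[offset_diff (p mod 3) (q mod 3) t = offset_diff (p mod 3) (q mod 3) t'] (mod int s)"
    using cyclic_block_gap_cong[OF assms(5,6,8,9)] cyclic_block_gap_cong[OF assms(5,6,10,11)]
    by (metis cong_sym cong_trans)
  then have "t = t'"
    using offset_diff_cong_imp_eq[OF s_ge_3 _ _ colours assms(3,4)] by simp
  then show ?thesis
    using cyclic_block_index_unique[OF assms(1,2,8)] assms(10) by blast
qed

lemma cyclic_block_inj:
  assumes "i < s" "i' < s" "t < 3" "t' < 3" "cyclic_block s i t = cyclic_block s i' t'"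
  shows "i = i' \<and> t = t'"
proof -
  let ?p = "cyclic_point s i t 0" and ?q = "cyclic_point s i t 1"
  have p_in: "?p \<in> cyclic_block s i t" and q_in: "?q \<in> cyclic_block s i t"
    by (simp_all add: cyclic_point_in_block)
  have "?p < 3 * s" "?q < 3 * s"
    using p_in q_in cyclic_block_subset[OF s_pos] by blast+
  moreover have "?p \<noteq> ?q" using cyclic_point_mod[of 0 s i t] cyclic_point_mod[of 1 s i t] by force
  ultimately show ?thesis
    by (rule cyclic_blocks_meet_once[OF assms(1-4) _ _ _ p_in q_in p_in[unfolded assms(5)]
          q_in[unfolded assms(5)]])
qed

lemma cyclic_blocks_through:
  assumes "p < 3 * s"
  shows "{b \<in> cyclic_blocks s. p \<in> b} = (\<lambda>t. cyclic_block s (base_index s p t) t) ` {..<3}"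
proof (intro equalityI subsetI)
  fix b assume "b \<in> {b \<in> cyclic_blocks s. p \<in> b}"
  then obtain i t where "i < s" "t < 3" "b = cyclic_block s i t" "p \<in> b" by (auto elim: cyclic_blocksE)
  then show "b \<in> (\<lambda>t. cyclic_block s (base_index s p t) t) ` {..<3}"
    using base_index_unique[OF _ assms] by auto
next
  fix b assume "b \<in> (\<lambda>t. cyclic_block s (base_index s p t) t) ` {..<3}"
  then show "b \<in> {b \<in> cyclic_blocks s. p \<in> b}"
    using mem_cyclic_block_base_index[OF assms] cyclic_block_in_blocks[OF base_index_less] by auto
qed

lemma card_cyclic_blocks_through:
  assumes "p < 3 * s"
  shows "card {b \<in> cyclic_blocks s. p \<in> b} = 3"
proof -
  have "inj_on (\<lambda>t. cyclic_block s (base_index s p t) t) {..<3}"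
    using cyclic_block_inj[OF base_index_less base_index_less] by (auto intro: inj_onI)
  then show ?thesis unfolding cyclic_blocks_through[OF assms] by (simp add: card_image)
qed

lemma card_cyclic_blocks: "card (cyclic_blocks s) = 3 * s"
proof -
  have "inj_on (\<lambda>(i, t). cyclic_block s i t) ({..<s} \<times> {..<3})"
    using cyclic_block_inj by (auto intro: inj_onI)
  then show ?thesis unfolding cyclic_blocks_def by (simp add: card_image card_cartesian_product)
qed

lemma sym_config_cyclic: "sym_config_v3 {..<3 * s} (cyclic_blocks s)"
  unfolding sym_config_v3_def
proof (intro conjI ballI impI)
  show "finite (cyclic_blocks s)" unfolding cyclic_blocks_def by simp
  show "card (cyclic_blocks s) = card {..<3 * s}" by (simp add: card_cyclic_blocks)
next
  fix b assume "b \<in> cyclic_blocks s"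
  then show "b \<subseteq> {..<3 * s}" "card b = 3"
    using cyclic_block_subset[OF s_pos] card_cyclic_block unfolding cyclic_blocks_def by auto
next
  fix p q assume "p \<in> {..<3 * s}" "q \<in> {..<3 * s}" "p \<noteq> q"
  have "b = b'" if b: "b \<in> {b \<in> cyclic_blocks s. p \<in> b \<and> q \<in> b}"
    and b': "b' \<in> {b \<in> cyclic_blocks s. p \<in> b \<and> q \<in> b}" for b b'
  proof -
    obtain i t i' t' where it: "i < s" "t < 3" "b = cyclic_block s i t"
      and it': "i' < s" "t' < 3" "b' = cyclic_block s i' t'"
      using b b' by (auto elim!: cyclic_blocksE)
    have "i = i' \<and> t = t'"
      using b b' it it' \<open>p \<in> {..<3 * s}\<close> \<open>q \<in> {..<3 * s}\<close> \<open>p \<noteq> q\<close>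
      by (intro cyclic_blocks_meet_once) auto
    then show "b = b'" using it(3) it'(3) by simp
  qed
  then show "card {b \<in> cyclic_blocks s. p \<in> b \<and> q \<in> b} \<le> 1"
    by (simp add: card_le_Suc0_iff_eq cyclic_blocks_def)
qed (simp_all add: card_cyclic_blocks_through)

lemma strong_colouring_cyclic: "strong_colouring {..<3 * s} (cyclic_blocks s) (\<lambda>p. p mod 3) 3"
  unfolding strong_colouring_def cyclic_blocks_def
  by (auto intro!: inj_onI dest: cyclic_block_colour_inj)

lemma cyclic_adj_iff:
  assumes "p < 3 * s" "q < 3 * s"
  shows "assoc_adj (cyclic_blocks s) p q \<longleftrightarrow> p mod 3 \<noteq> q mod 3 \<and>
    (\<exists>t<3. [offset_diff (p mod 3) (q mod 3) t = int (q div 3) - int (p div 3)] (mod int s))"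
proof
  assume "assoc_adj (cyclic_blocks s) p q"
  then obtain i t where "p \<noteq> q" "t < 3" "p \<in> cyclic_block s i t" "q \<in> cyclic_block s i t"
    unfolding assoc_adj_def by (auto elim!: cyclic_blocksE)
  then show "p mod 3 \<noteq> q mod 3 \<and>
      (\<exists>t<3. [offset_diff (p mod 3) (q mod 3) t = int (q div 3) - int (p div 3)] (mod int s))"
    using cyclic_block_colour_inj cyclic_block_gap_cong[OF assms] by blast
next
  assume "p mod 3 \<noteq> q mod 3 \<and>
      (\<exists>t<3. [offset_diff (p mod 3) (q mod 3) t = int (q div 3) - int (p div 3)] (mod int s))"
  then obtain t where colours: "p mod 3 \<noteq> q mod 3" and "t < 3"
    and gap: "[offset_diff (p mod 3) (q mod 3) t = int (q div 3) - int (p div 3)] (mod int s)"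
    by blast
  let ?i = "base_index s p t"
  have p_in: "p \<in> cyclic_block s ?i t" by (rule mem_cyclic_block_base_index[OF assms(1)])
  have "[int ?i + int (offset (q mod 3) t) = int (q div 3)] (mod int s)"
    using cong_add[OF p_in[unfolded mem_cyclic_block_iff_cong[OF assms(1)]] gap]
    by (simp add: offset_diff_def)
  then have "q \<in> cyclic_block s ?i t" using mem_cyclic_block_iff_cong[OF assms(2)] by blast
  then show "assoc_adj (cyclic_blocks s) p q"
    unfolding assoc_adj_def using p_in colours cyclic_block_in_blocks[OF base_index_less \<open>t < 3\<close>]
    by blast
qed

lemma cyclic_neighbours_of_colour:
  assumes "x < 3 * s" "b < 3" "b \<noteq> x mod 3"
  shows "{y. y < 3 * s \<and> y mod 3 = b \<and> assoc_adj (cyclic_blocks s) x y}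
    = (\<lambda>t. cyclic_point s (base_index s x t) t b) ` {..<3}"
proof (intro equalityI subsetI)
  fix y assume "y \<in> {y. y < 3 * s \<and> y mod 3 = b \<and> assoc_adj (cyclic_blocks s) x y}"
  then have y: "y mod 3 = b" and "assoc_adj (cyclic_blocks s) x y" by auto
  then obtain blk where "blk \<in> cyclic_blocks s" "x \<in> blk" "y \<in> blk"
    unfolding assoc_adj_def by blast
  then obtain i t where "i < s" "t < 3" "x \<in> cyclic_block s i t" "y \<in> cyclic_block s i t"
    by (metis cyclic_blocksE)
  moreover from this have "i = base_index s x t" using base_index_unique assms(1) by blast
  ultimately have "y div 3 = (base_index s x t + offset b t) mod s"
    using y by (simp add: mem_cyclic_block_iff)
  then have "y = cyclic_point s (base_index s x t) t b"
    unfolding cyclic_point_def using y div_mult_mod_eq[of y 3] by simp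
  then show "y \<in> (\<lambda>t. cyclic_point s (base_index s x t) t b) ` {..<3}"
    using \<open>t < 3\<close> by blast
next
  fix y assume "y \<in> (\<lambda>t. cyclic_point s (base_index s x t) t b) ` {..<3}"
  then obtain t where "t < 3" and y: "y = cyclic_point s (base_index s x t) t b"
    by blast
  have y_in: "y \<in> cyclic_block s (base_index s x t) t"
    unfolding y using assms(2) by (rule cyclic_point_in_block)
  have "y mod 3 = b" unfolding y using assms(2) by (rule cyclic_point_mod)
  then have "x \<noteq> y" using assms(3) by metis
  then have "assoc_adj (cyclic_blocks s) x y"
    unfolding assoc_adj_def using y_in mem_cyclic_block_base_index[OF assms(1)]
      cyclic_block_in_blocks[OF base_index_less \<open>t < 3\<close>] by blast
  moreover have "y < 3 * s" using cyclic_block_subset[OF s_pos] y_in by blast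
  ultimately show "y \<in> {y. y < 3 * s \<and> y mod 3 = b \<and> assoc_adj (cyclic_blocks s) x y}"
    using \<open>y mod 3 = b\<close> by blast
qed

lemma card_cyclic_neighbours_of_colour:
  assumes "x < 3 * s" "b < 3" "b \<noteq> x mod 3"
  shows "card {y. y < 3 * s \<and> y mod 3 = b \<and> assoc_adj (cyclic_blocks s) x y} = 3"
proof -
  \<comment> \<open>distinct t give distinct neighbours, since two blocks through x meet only in x\<close>
  have "t = t'" if "t < 3" "t' < 3"
    and eq: "cyclic_point s (base_index s x t) t b = cyclic_point s (base_index s x t') t' b" for t t'
  proof -
    let ?y = "cyclic_point s (base_index s x t) t b"
    have y_in: "?y \<in> cyclic_block s (base_index s x t) t"
      using assms(2) by (rule cyclic_point_in_block)
    have y_in': "?y \<in> cyclic_block s (base_index s x t') t'"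
      unfolding eq using assms(2) by (rule cyclic_point_in_block)
    have "?y mod 3 = b" using assms(2) by (rule cyclic_point_mod)
    then have x_ne_y: "x \<noteq> ?y" using assms(3) by metis
    have y_less: "?y < 3 * s" using cyclic_block_subset[OF s_pos] y_in by blast
    have "base_index s x t = base_index s x t' \<and> t = t'"
      by (rule cyclic_blocks_meet_once[OF base_index_less base_index_less that(1,2) assms(1) y_less
          x_ne_y mem_cyclic_block_base_index[OF assms(1)] y_in mem_cyclic_block_base_index[OF assms(1)]
          y_in'])
    then show "t = t'" by simp
  qed
  then have "inj_on (\<lambda>t. cyclic_point s (base_index s x t) t b) {..<3}"
    by (auto intro: inj_onI)
  then show ?thesis unfolding cyclic_neighbours_of_colour[OF assms] by (simp add: card_image)
qed

lemma card_induced_cyclic_neighbours: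
  assumes "c < 3" "x \<in> avoiding_colour s c"
  shows "card {y \<in> avoiding_colour s c.
    induced_assoc (cyclic_blocks s) (avoiding_colour s c) x y} = 3"
proof -
  have x: "x < 3 * s" "x mod 3 \<noteq> c" "x mod 3 < 3" using assms(2) by auto
  define b where "b = 3 - c - x mod 3"
  have third: "j = b \<longleftrightarrow> j \<noteq> c \<and> j \<noteq> x mod 3" if "j < 3" for j
    unfolding b_def by (rule third_colour_iff[OF x(3) assms(1) that x(2)])
  have "0 < c + x mod 3" using x(2) by (cases c) auto
  then have "b < 3" unfolding b_def by linarith
  then have "b \<noteq> x mod 3" using third by blast
  have "y \<in> avoiding_colour s c \<and> induced_assoc (cyclic_blocks s) (avoiding_colour s c) x y
      \<longleftrightarrow> y < 3 * s \<and> y mod 3 = b \<and> assoc_adj (cyclic_blocks s) x y" for y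
  proof (cases "assoc_adj (cyclic_blocks s) x y")
    case True
    then have "x mod 3 \<noteq> y mod 3"
      by (rule assoc_adj_colours_differ[OF strong_colouring_cyclic])
    then have "y mod 3 = b \<longleftrightarrow> y mod 3 \<noteq> c"
      using third[of "y mod 3"] by simp
    then show ?thesis
      using x(1,2) True unfolding induced_assoc_def mem_Collect_eq lessThan_iff by blast
  next
    case False
    then show ?thesis unfolding induced_assoc_def by simp
  qed
  then have "{y \<in> avoiding_colour s c. induced_assoc (cyclic_blocks s) (avoiding_colour s c) x y}
      = {y. y < 3 * s \<and> y mod 3 = b \<and> assoc_adj (cyclic_blocks s) x y}"
    by blast
  then show ?thesis
    using card_cyclic_neighbours_of_colour[OF x(1) \<open>b < 3\<close> \<open>b \<noteq> x mod 3\<close>] by simp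
qed

lemma relabel_less:
  assumes "\<sigma> (p mod 3) < 3"
  shows "relabel s k \<sigma> p < 3 * s"
proof -
  have "relabel s k \<sigma> p div 3 < s"
    using relabel_div[of \<sigma> p s k, OF assms] s_pos by (simp add: nat_less_iff)
  then show ?thesis by (simp add: div_less_iff_less_mult mult.commute)
qed

lemma relabel_index_cong:
  "\<sigma> (p mod 3) < 3 \<Longrightarrow>
    [int (relabel s k \<sigma> p div 3) = int (p div 3) + k (p mod 3)] (mod int s)"
  using relabel_div[of \<sigma> p s k] s_pos by (simp add: cong_def)

lemma relabel_bij_betw:
  assumes "c < 3" "c' < 3"
    and colours: "\<And>a. a < 3 \<Longrightarrow> a \<noteq> c \<Longrightarrow> \<sigma> a < 3 \<and> \<sigma> a \<noteq> c'"
    and colours_inj: "inj_on \<sigma> ({..<3} - {c})"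
  shows "bij_betw (relabel s k \<sigma>) (avoiding_colour s c) (avoiding_colour s c')"
proof -
  let ?f = "relabel s k \<sigma>" and ?W = "avoiding_colour s c" and ?V = "avoiding_colour s c'"
  have \<sigma>: "\<sigma> (p mod 3) < 3" "\<sigma> (p mod 3) \<noteq> c'" if "p \<in> ?W" for p
    using colours[of "p mod 3"] that by auto
  have "inj_on ?f ?W"
  proof (rule inj_onI)
    fix p q assume p: "p \<in> ?W" and q: "q \<in> ?W" and eq: "?f p = ?f q"
    have "\<sigma> (p mod 3) = \<sigma> (q mod 3)"
      using relabel_mod[of \<sigma> p s k, OF \<sigma>(1)[OF p]] relabel_mod[of \<sigma> q s k, OF \<sigma>(1)[OF q]] eq by simp
    then have colour: "p mod 3 = q mod 3"
      using inj_onD[OF colours_inj, of "p mod 3" "q mod 3"] p q by auto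
    have "[int (p div 3) + k (p mod 3) = int (q div 3) + k (q mod 3)] (mod int s)"
      using relabel_index_cong[of \<sigma> p k, OF \<sigma>(1)[OF p]] relabel_index_cong[of \<sigma> q k, OF \<sigma>(1)[OF q]] eq
      by (metis cong_sym cong_trans)
    then have "[p div 3 = q div 3] (mod s)"
      unfolding colour cong_add_rcancel cong_int_iff .
    moreover have "p div 3 < s" "q div 3 < s" using p q by auto
    ultimately have "p div 3 = q div 3" by (rule cong_less_modulus_unique_nat)
    with colour show "p = q" by (metis div_mult_mod_eq)
  qed
  moreover have "?f ` ?W = ?V"
  proof (rule card_subset_eq)
    show "?f ` ?W \<subseteq> ?V"
    proof
      fix y assume "y \<in> ?f ` ?W"
      then obtain p where "p \<in> ?W" "y = ?f p" by blast
      then show "y \<in> ?V"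
        using relabel_less[of \<sigma> p k] relabel_mod[of \<sigma> p s k] \<sigma>[of p] by simp
    qed
    show "card (?f ` ?W) = card ?V"
      using card_image[OF \<open>inj_on ?f ?W\<close>] card_avoiding_colour assms(1,2) by simp
  qed simp
  ultimately show ?thesis by (rule bij_betw_imageI)
qed

lemma relabel_assoc_adj_iff:
  assumes colours: "\<And>a. a < 3 \<Longrightarrow> a \<noteq> c \<Longrightarrow> \<sigma> a < 3"
    and colours_inj: "inj_on \<sigma> ({..<3} - {c})"
    and gaps: "\<And>a b. a < 3 \<Longrightarrow> b < 3 \<Longrightarrow> a \<noteq> c \<Longrightarrow> b \<noteq> c \<Longrightarrow> a \<noteq> b \<Longrightarrow>
      (\<lambda>t. offset_diff (\<sigma> a) (\<sigma> b) t + k a - k b) ` {..<3} = offset_diff a b ` {..<3}"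
    and x: "x \<in> avoiding_colour s c" and y: "y \<in> avoiding_colour s c"
  shows "assoc_adj (cyclic_blocks s) x y \<longleftrightarrow>
    assoc_adj (cyclic_blocks s) (relabel s k \<sigma> x) (relabel s k \<sigma> y)"
proof -
  let ?f = "relabel s k \<sigma>" and ?a = "x mod 3" and ?b = "y mod 3"
  let ?X = "int (x div 3)" and ?Y = "int (y div 3)"
  let ?fX = "int (?f x div 3)" and ?fY = "int (?f y div 3)"
  have \<sigma>: "\<sigma> ?a < 3" "\<sigma> ?b < 3" using colours x y by auto
  have colour_iff: "\<sigma> ?a = \<sigma> ?b \<longleftrightarrow> ?a = ?b"
    using inj_onD[OF colours_inj, of ?a ?b] x y by auto
  have adj_iff: "assoc_adj (cyclic_blocks s) (?f x) (?f y) \<longleftrightarrow> \<sigma> ?a \<noteq> \<sigma> ?b \<and>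
      (\<exists>t<3. [offset_diff (\<sigma> ?a) (\<sigma> ?b) t = ?fY - ?fX] (mod int s))"
    using cyclic_adj_iff[OF relabel_less[of \<sigma> x k, OF \<sigma>(1)] relabel_less[of \<sigma> y k, OF \<sigma>(2)]]
    by (simp only: relabel_mod[of \<sigma> x s k, OF \<sigma>(1)] relabel_mod[of \<sigma> y s k, OF \<sigma>(2)])
  show ?thesis
  proof (cases "?a = ?b")
    case True
    then show ?thesis using adj_iff cyclic_adj_iff[of x y] x y by simp
  next
    case False
    have index_shift: "[?fY - ?fX = ?Y - ?X + (k ?b - k ?a)] (mod int s)"
      using cong_diff[OF relabel_index_cong[of \<sigma> y k, OF \<sigma>(2)] relabel_index_cong[of \<sigma> x k, OF \<sigma>(1)]]
      by (simp add: algebra_simps)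
    have shift: "[d = ?fY - ?fX] (mod int s) \<longleftrightarrow> [d + k ?a - k ?b = ?Y - ?X] (mod int s)" for d
    proof -
      have "[d = ?fY - ?fX] (mod int s) \<longleftrightarrow> [d = ?Y - ?X + (k ?b - k ?a)] (mod int s)"
        using index_shift by (meson cong_sym cong_trans)
      also have "\<dots> \<longleftrightarrow> [d + k ?a - k ?b = ?Y - ?X] (mod int s)"
        by (simp add: cong_iff_dvd_diff algebra_simps)
      finally show ?thesis .
    qed
    have "(\<exists>t<3. [offset_diff (\<sigma> ?a) (\<sigma> ?b) t = ?fY - ?fX] (mod int s)) \<longleftrightarrow>
        (\<exists>d\<in>(\<lambda>t. offset_diff (\<sigma> ?a) (\<sigma> ?b) t + k ?a - k ?b) ` {..<3}. [d = ?Y - ?X] (mod int s))"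
      unfolding shift by auto
    also have "\<dots> \<longleftrightarrow> (\<exists>d\<in>offset_diff ?a ?b ` {..<3}. [d = ?Y - ?X] (mod int s))"
      using gaps[of ?a ?b] x y False by simp
    also have "\<dots> \<longleftrightarrow> (\<exists>t<3. [offset_diff ?a ?b t = ?Y - ?X] (mod int s))"
      by auto
    finally show ?thesis using adj_iff cyclic_adj_iff[of x y] x y colour_iff False by simp
  qed
qed

lemma relabel_graph_iso:
  assumes "c < 3" "c' < 3"
    and colours: "\<And>a. a < 3 \<Longrightarrow> a \<noteq> c \<Longrightarrow> \<sigma> a < 3 \<and> \<sigma> a \<noteq> c'"
    and colours_inj: "inj_on \<sigma> ({..<3} - {c})"
    and gaps: "\<And>a b. a < 3 \<Longrightarrow> b < 3 \<Longrightarrow> a \<noteq> c \<Longrightarrow> b \<noteq> c \<Longrightarrow> a \<noteq> b \<Longrightarrow>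
      (\<lambda>t. offset_diff (\<sigma> a) (\<sigma> b) t + k a - k b) ` {..<3} = offset_diff a b ` {..<3}"
  shows "graph_iso (avoiding_colour s c) (induced_assoc (cyclic_blocks s) (avoiding_colour s c))
    (avoiding_colour s c') (induced_assoc (cyclic_blocks s) (avoiding_colour s c'))"
proof (rule graph_iso_induced_assocI)
  show "bij_betw (relabel s k \<sigma>) (avoiding_colour s c) (avoiding_colour s c')"
    by (rule relabel_bij_betw[OF assms(1,2) colours colours_inj])
  show "assoc_adj (cyclic_blocks s) x y \<longleftrightarrow>
      assoc_adj (cyclic_blocks s) (relabel s k \<sigma> x) (relabel s k \<sigma> y)"
    if "x \<in> avoiding_colour s c" "y \<in> avoiding_colour s c" for x y
    using colours by (intro relabel_assoc_adj_iff[OF _ colours_inj gaps that]) blast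
qed

lemma avoiding_colour_graph_iso:
  assumes "c < 3"
  shows "graph_iso (avoiding_colour s c) (induced_assoc (cyclic_blocks s) (avoiding_colour s c))
    (avoiding_colour s 2) (induced_assoc (cyclic_blocks s) (avoiding_colour s 2))"
  \<comment> \<open>\<sigma> closes the gap left by colour c; the gaps between colours 1 and 2 are those between
    0 and 1 shifted by -1, so when c = 0 the points of colour 2 move up by one\<close>
proof (rule relabel_graph_iso[where \<sigma> = "\<lambda>a. if a < c then a else a - 1"
      and k = "\<lambda>a. if c = 0 \<and> a = 2 then 1 else 0"])
  have c: "c = 0 \<or> c = 1 \<or> c = 2" using assms by linarith
  have three: "{..<3::nat} = {0, 1, 2}" by auto
  show "c < 3" "2 < (3::nat)" by (fact assms) simp
  show "(if a < c then a else a - 1) < 3 \<and> (if a < c then a else a - 1) \<noteq> 2"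
    if "a < 3" "a \<noteq> c" for a
    using that c by auto
  show "inj_on (\<lambda>a. if a < c then a else a - 1) ({..<3} - {c})"
    using c by (auto simp: inj_on_def three)
  show "(\<lambda>t. offset_diff (if a < c then a else a - 1) (if b < c then b else b - 1) t
        + (if c = 0 \<and> a = 2 then 1 else 0) - (if c = 0 \<and> b = 2 then 1 else 0)) ` {..<3}
      = offset_diff a b ` {..<3}"
    if "a < 3" "b < 3" "a \<noteq> c" "b \<noteq> c" "a \<noteq> b" for a b
  proof -
    have "a = 0 \<or> a = 1 \<or> a = 2" "b = 0 \<or> b = 1 \<or> b = 2" using that(1,2) by linarith+
    then show ?thesis using c that(3-5)
      by (elim disjE) (auto simp: three offset_diff_def offset_def)
  qed
qed

end

theorem mainTheorem13:
  fixes s :: nat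
  assumes "s \<ge> 3"
  shows "\<exists>(V :: nat set) (E :: nat \<Rightarrow> nat \<Rightarrow> bool) (P :: nat set) (B :: nat set set) (c :: nat \<Rightarrow> nat).
           cubic_bipartite_graph V E \<and> card V = 2 * s \<and>
           sym_config_v3 P B \<and> card P = 3 * s \<and>
           strong_chromatic_number P B = 3 \<and>
           strong_colouring P B c 3 \<and>
           (\<forall>i<3. graph_iso {p\<in>P. c p \<noteq> i} (induced_assoc B {p\<in>P. c p \<noteq> i}) V E)"
proof -
  let ?P = "{..<3 * s}" and ?B = "cyclic_blocks s" and ?V = "avoiding_colour s 2"
  have config: "sym_config_v3 ?P ?B" by (rule sym_config_cyclic[OF assms])
  have colouring: "strong_colouring ?P ?B (\<lambda>p. p mod 3) 3" by (rule strong_colouring_cyclic[OF assms])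
  have "cubic_bipartite_graph ?V (induced_assoc ?B ?V)"
    using induced_colour_class_cubic_bipartite[OF _ colouring, of 2]
      card_induced_cyclic_neighbours[OF assms, of 2] by simp
  moreover have "card ?V = 2 * s" by (rule card_avoiding_colour) simp
  moreover have "strong_chromatic_number ?P ?B = 3"
    by (rule strong_chromatic_number_eq_3[OF config _ colouring]) (use assms in \<open>auto simp: lessThan_empty_iff\<close>)
  moreover have "\<forall>i<3. graph_iso (avoiding_colour s i) (induced_assoc ?B (avoiding_colour s i))
      ?V (induced_assoc ?B ?V)"
    using avoiding_colour_graph_iso[OF assms] by blast
  ultimately show ?thesis
    using config colouring by (intro exI[of _ ?V] exI[of _ "induced_assoc ?B ?V"] exI[of _ ?P]
        exI[of _ ?B] exI[of _ "\<lambda>p. p mod 3"]) simp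
qed

end
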